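(* Fix $r\in\mathbb{N}$. Let $\sigma:\mathbb{R}\to\mathbb{R}$ be continuous and discriminatory. Then $\mathcal{N}_r(\sigma,\mathbb{Z}^r,\mathbb{Z})=\mathrm{span}\{x\mapsto\sigma(m^{\mathrm T}x+k): m\in\mathbb{Z}^r,\ k\in\mathbb{Z}\}$ is dense in $C(\mathbb{R}^r)$ in the sense of uniform convergence on compact sets, i.e. for every nonempty compact $K\subset\mathbb{R}^r$, every $g\in C(\mathbb{R}^r)$ and every $\varepsilon>0$ there is $s\in\mathcal{N}_r(\sigma,\mathbb{Z}^r,\mathbb{Z})$ with $\sup_{x\in K}|s(x)-g(x)|<\varepsilon$.
   Context: For a nonempty compact $X\subset\mathbb{R}^r$ (with subspace topology), $M(X)$ denotes the set of regular signed Borel measures on $X$, i.e. finite signed measures $\mu$ on the Borel $\sigma$-algebra of $X$ whose positive and negative variations are regular Borel measures. A function $\sigma:\mathbb{R}\to\mathbb{R}$ is discriminatory (for $r$) if for every nonempty compact $X\subset\mathbb{R}^r$ and every $\mu\in M(X)$: if $\int_X\sigma(m^{\mathrm T}x+k)\,d\mu(x)=0$ for all $m\in\mathbb{Z}^r$, $k\in\mathbb{Z}$, then $\mu=0$. *)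

theory Defs
  imports "HOL-Analysis.Analysis"
begin

definition int_vecs :: "(real ^ 'n) set" where
  "int_vecs = {m. \<forall>i. m $ i \<in> \<int>}"

definition regular_finite_borel :: "(real ^ 'n) set \<Rightarrow> (real ^ 'n) measure \<Rightarrow> bool" where
  "regular_finite_borel X M \<longleftrightarrow>
     sets M = sets (restrict_space borel X) \<and> finite_measure M \<and>
     (\<forall>A \<in> sets M.
        emeasure M A = (SUP K \<in> {K. compact K \<and> K \<subseteq> A}. emeasure M K) \<and>
        emeasure M A = (INF U \<in> {U. openin (top_of_set X) U \<and> A \<subseteq> U}. emeasure M U))"

text \<open>A regular signed Borel measure mu on X is represented as a difference
  M1 - M2 of two finite regular Borel measures on X (every such difference is
  a regular signed measure, and the Jordan decomposition shows every regular
  signed measure arises this way).\<close>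
definition discriminatory :: "(real \<Rightarrow> real) \<Rightarrow> 'n::finite itself \<Rightarrow> bool" where
  "discriminatory \<sigma> (_ :: 'n itself) \<longleftrightarrow>
     (\<forall>(X :: (real ^ 'n) set) M1 M2.
        X \<noteq> {} \<and> compact X \<and> regular_finite_borel X M1 \<and> regular_finite_borel X M2 \<and>
        (\<forall>m \<in> int_vecs. \<forall>k \<in> \<int>.
           (\<integral>x. \<sigma> (m \<bullet> x + k) \<partial>M1) - (\<integral>x. \<sigma> (m \<bullet> x + k) \<partial>M2) = 0)
        \<longrightarrow> (\<forall>A \<in> sets M1. measure M1 A - measure M2 A = 0))"

definition NN :: "(real \<Rightarrow> real) \<Rightarrow> (real ^ 'n \<Rightarrow> real) set" where
  "NN \<sigma> = {s. \<exists>F c. finite F \<and> F \<subseteq> int_vecs \<times> \<int> \<and>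
                 s = (\<lambda>x. \<Sum>p\<in>F. c p * \<sigma> (fst p \<bullet> x + snd p))}"

end

theory Submission
  imports Defs "HOL-Probability.Probability"
begin

(* The exponentials exp(m.x), m in Z^r, span an algebra that separates points, so by
   Stone-Weierstrass it suffices to approximate each of them.  As exp(m.x) = exp t at
   t = m.x and sigma(a t + b) = sigma((a m).x + b), this reduces to the density of
   span {sigma(a t + b) : a, b in Z} in C[-R, R].

   That one-dimensional statement is proved without Hahn-Banach or the Riesz representation
   theorem.  Probability measures on the line encode signed measures on [-R, R], and the
   penalty of an encoding is small when its signed measure nearly annihilates the first N
   ridge functions while integrating h to at least epsilon.  If for some N the penalty is
   bounded away from zero on finitely supported encodings, first-order optimality at a
   near-minimiser yields coefficients approximating h within epsilon.  Otherwise Helly's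
   selection theorem gives a limit encoding whose signed measure annihilates every
   sigma(a t + b) but integrates h to at least epsilon; transported to a segment in R^r,
   this contradicts that sigma is discriminatory. *)

lemma NN_zero: "(\<lambda>x. 0) \<in> NN \<sigma>"
  unfolding NN_def by (intro CollectI exI[of _ "{}"]) auto

lemma NN_ridge:
  assumes "m \<in> int_vecs" "k \<in> \<int>"
  shows "(\<lambda>x. \<sigma> (m \<bullet> x + k)) \<in> NN \<sigma>"
  unfolding NN_def using assms
  by (intro CollectI exI[of _ "{(m, k)}"] exI[of _ "\<lambda>_. 1"]) auto

lemma NN_cmult:
  assumes "s \<in> NN \<sigma>"
  shows "(\<lambda>x. c * s x) \<in> NN \<sigma>"
proof -
  from assms obtain F a where "finite F" "F \<subseteq> int_vecs \<times> \<int>"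
    and s: "s = (\<lambda>x. \<Sum>p\<in>F. a p * \<sigma> (fst p \<bullet> x + snd p))"
    unfolding NN_def by blast
  then show ?thesis
    unfolding NN_def
    by (intro CollectI exI[of _ F] exI[of _ "\<lambda>p. c * a p"]) (auto simp: sum_distrib_left mult.assoc)
qed

lemma NN_add:
  assumes "s \<in> NN \<sigma>" "s' \<in> NN \<sigma>"
  shows "(\<lambda>x. s x + s' x) \<in> NN \<sigma>"
proof -
  from assms obtain F a F' a' where F: "finite F" "F \<subseteq> int_vecs \<times> \<int>" "finite F'" "F' \<subseteq> int_vecs \<times> \<int>"
    and s: "s = (\<lambda>x. \<Sum>p\<in>F. a p * \<sigma> (fst p \<bullet> x + snd p))"
    and s': "s' = (\<lambda>x. \<Sum>p\<in>F'. a' p * \<sigma> (fst p \<bullet> x + snd p))"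
    unfolding NN_def by blast
  define b where "b p = (if p \<in> F then a p else 0) + (if p \<in> F' then a' p else 0)" for p
  have "s x + s' x = (\<Sum>p\<in>F \<union> F'. b p * \<sigma> (fst p \<bullet> x + snd p))" for x
  proof -
    have "(\<Sum>p\<in>F \<union> F'. (if p \<in> F then a p else 0) * \<sigma> (fst p \<bullet> x + snd p)) = s x"
      "(\<Sum>p\<in>F \<union> F'. (if p \<in> F' then a' p else 0) * \<sigma> (fst p \<bullet> x + snd p)) = s' x"
      unfolding s s' using F by (intro sum.mono_neutral_cong_right; auto)+
    then show ?thesis
      unfolding b_def distrib_right sum.distrib by simp
  qed
  then show ?thesis
    unfolding NN_def using F by blast
qed

lemma NN_sum:
  assumes "finite I" "\<And>i. i \<in> I \<Longrightarrow> f i \<in> NN \<sigma>"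
  shows "(\<lambda>x. \<Sum>i\<in>I. f i x) \<in> NN \<sigma>"
  using assms by (induction I rule: finite_induct) (auto intro: NN_zero NN_add)

lemma int_vecs_zero: "0 \<in> int_vecs"
  unfolding int_vecs_def by auto

lemma int_vecs_add: "a \<in> int_vecs \<Longrightarrow> b \<in> int_vecs \<Longrightarrow> a + b \<in> int_vecs"
  unfolding int_vecs_def by auto

lemma int_vecs_scaleR: "c \<in> \<int> \<Longrightarrow> m \<in> int_vecs \<Longrightarrow> c *\<^sub>R m \<in> int_vecs"
  unfolding int_vecs_def by auto

lemma axis_in_int_vecs: "axis i 1 \<in> int_vecs"
  unfolding int_vecs_def axis_def by auto

section \<open>Exponential sums\<close>

inductive_set exp_poly :: "(real ^ 'n \<Rightarrow> real) set" where
  exp: "m \<in> int_vecs \<Longrightarrow> (\<lambda>x. exp (m \<bullet> x)) \<in> exp_poly"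
| cmult: "f \<in> exp_poly \<Longrightarrow> (\<lambda>x. c * f x) \<in> exp_poly"
| add: "f \<in> exp_poly \<Longrightarrow> g \<in> exp_poly \<Longrightarrow> (\<lambda>x. f x + g x) \<in> exp_poly"

lemma exp_poly_mult_exp:
  assumes "m \<in> int_vecs" "g \<in> exp_poly"
  shows "(\<lambda>x. exp (m \<bullet> x) * g x) \<in> exp_poly"
  using assms(2)
proof induction
  case (exp m')
  have "(\<lambda>x. exp (m \<bullet> x) * exp (m' \<bullet> x)) = (\<lambda>x. exp ((m + m') \<bullet> x))"
    by (simp add: inner_add_left exp_add)
  then show ?case
    using exp_poly.exp[OF int_vecs_add[OF assms(1) exp]] by simp
next
  case (cmult f c)
  then show ?case
    using exp_poly.cmult[OF cmult.IH, of c] by (simp add: algebra_simps)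
next
  case (add f g)
  then show ?case
    using exp_poly.add[OF add.IH] by (simp add: algebra_simps)
qed

lemma exp_poly_mult:
  assumes "f \<in> exp_poly" "g \<in> exp_poly"
  shows "(\<lambda>x. f x * g x) \<in> exp_poly"
  using assms(1)
proof induction
  case (exp m)
  then show ?case
    using exp_poly_mult_exp[OF exp assms(2)] by simp
next
  case (cmult f c)
  then show ?case
    using exp_poly.cmult[OF cmult.IH, of c] by (simp add: algebra_simps)
next
  case (add f f')
  then show ?case
    using exp_poly.add[OF add.IH] by (simp add: algebra_simps)
qed

lemma exp_poly_const: "(\<lambda>x. c) \<in> exp_poly"
  using exp_poly.cmult[OF exp_poly.exp[OF int_vecs_zero], of c] by simp

lemma continuous_on_exp_poly: "f \<in> exp_poly \<Longrightarrow> continuous_on S f"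
  by (induction rule: exp_poly.induct) (auto intro!: continuous_intros)

lemma exp_poly_separating:
  fixes x y :: "real ^ 'n"
  assumes "x \<noteq> y"
  shows "\<exists>f\<in>exp_poly. f x \<noteq> f y"
proof -
  obtain i where "x $ i \<noteq> y $ i"
    using assms by (auto simp: vec_eq_iff)
  then show ?thesis
    by (intro bexI[OF _ exp_poly.exp[OF axis_in_int_vecs[of i]]]) (simp add: inner_axis')
qed

lemma exp_poly_dense:
  fixes K :: "(real ^ 'n) set"
  assumes "compact K" "continuous_on K g" "\<epsilon> > 0"
  shows "\<exists>f\<in>exp_poly. \<forall>x\<in>K. \<bar>f x - g x\<bar> < \<epsilon>"
proof -
  interpret function_ring_on exp_poly K
  proof
    show "compact K" by (rule assms(1))
  qed (auto intro: continuous_on_exp_poly exp_poly.add exp_poly_mult exp_poly_const exp_poly_separating)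
  obtain F where F: "range F \<subseteq> exp_poly" "uniform_limit K F g sequentially"
    using Stone_Weierstrass[OF assms(2)] by blast
  then have "\<forall>\<^sub>F n in sequentially. \<forall>x\<in>K. dist (F n x) (g x) < \<epsilon>"
    using assms(3) uniform_limitD by blast
  then obtain n where "\<forall>x\<in>K. dist (F n x) (g x) < \<epsilon>"
    unfolding eventually_sequentially by blast
  then show ?thesis
    using F(1) by (auto simp: dist_real_def intro!: bexI[of _ "F n"])
qed

section \<open>Signed measures on an interval encoded by probability measures\<close>

lemma continuous_on_interval_bounded:
  fixes f :: "real \<Rightarrow> real"
  assumes "continuous_on {a..b} f"
  obtains B where "0 \<le> B" "\<And>t. t \<in> {a..b} \<Longrightarrow> \<bar>f t\<bar> \<le> B"
proof -
  have "bounded (f ` {a..b})"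
    using assms by (intro compact_imp_bounded compact_continuous_image) auto
  then obtain B where "\<forall>y\<in>f ` {a..b}. norm y \<le> B"
    using bounded_iff by blast
  then show ?thesis
    by (intro that[of "max 0 B"]) force+
qed

(* A probability measure rho on the line encodes the signed measure on [-R, R] that
   integrates f to the rho-integral of signed_lift R f: mass at u >= 1 acts as the point mass
   at u - (R + 1) (clamped to [-R, R]), mass at u <= -1 as minus the point mass at u + (R + 1),
   and mass in between is damped continuously.  Unlike signed measures, probability measures
   are weakly compact. *)
definition signed_lift :: "real \<Rightarrow> (real \<Rightarrow> real) \<Rightarrow> real \<Rightarrow> real" where
  "signed_lift R f u =
     max 0 (min 1 u) * f (clamp (-R) R (u - (R + 1)))
   - max 0 (min 1 (-u)) * f (clamp (-R) R (u + (R + 1)))"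

lemma continuous_on_signed_lift:
  assumes "continuous_on {-R..R} f"
  shows "continuous_on UNIV (signed_lift R f)"
proof -
  have clamped: "continuous_on UNIV (\<lambda>u. f (clamp (-R) R (g u)))" if "continuous_on UNIV g" for g
    using assms that by (intro continuous_on_compose2[OF clamp_continuous_on[of "-R" R f UNIV]]) auto
  show ?thesis
    unfolding signed_lift_def by (intro continuous_intros clamped)
qed

lemma abs_signed_lift_le:
  assumes "0 \<le> R" "\<And>t. t \<in> {-R..R} \<Longrightarrow> \<bar>f t\<bar> \<le> B"
  shows "\<bar>signed_lift R f u\<bar> \<le> B"
proof -
  have f: "\<bar>f (clamp (-R) R v)\<bar> \<le> B" for v
    using assms clamp_in_interval[of "-R" R v] by auto
  show ?thesis
  proof (cases "0 \<le> u")
    case True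
    then have "\<bar>signed_lift R f u\<bar> = min 1 u * \<bar>f (clamp (-R) R (u - (R + 1)))\<bar>"
      by (simp add: signed_lift_def abs_mult)
    also have "\<dots> \<le> 1 * B"
      using f True by (intro mult_mono) auto
    finally show ?thesis by simp
  next
    case False
    then have "\<bar>signed_lift R f u\<bar> = min 1 (-u) * \<bar>f (clamp (-R) R (u + (R + 1)))\<bar>"
      by (simp add: signed_lift_def abs_mult)
    also have "\<dots> \<le> 1 * B"
      using f False by (intro mult_mono) auto
    finally show ?thesis by simp
  qed
qed

lemma signed_lift_right: "t \<in> {-R..R} \<Longrightarrow> signed_lift R f (t + (R + 1)) = f t"
  unfolding signed_lift_def by simp

lemma signed_lift_left: "t \<in> {-R..R} \<Longrightarrow> signed_lift R f (t - (R + 1)) = - f t"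
  unfolding signed_lift_def by simp

lemma signed_lift_clamp:
  assumes "0 \<le> R"
  shows "signed_lift R (\<lambda>t. f (clamp (-R) R t)) = signed_lift R f"
proof -
  have "clamp (-R) R (clamp (-R) R x) = clamp (-R) R x" for x :: real
    using assms by (intro clamp_cancel_cbox clamp_in_interval) simp
  then show ?thesis
    unfolding signed_lift_def by simp
qed

definition lift_expectation :: "real \<Rightarrow> real pmf \<Rightarrow> (real \<Rightarrow> real) \<Rightarrow> real" where
  "lift_expectation R p f = measure_pmf.expectation p (signed_lift R f)"

lemma lift_expectation_finite:
  "finite (set_pmf p) \<Longrightarrow> lift_expectation R p f = (\<Sum>u\<in>set_pmf p. pmf p u * signed_lift R f u)"
  unfolding lift_expectation_def by (subst integral_measure_pmf[of "set_pmf p"]) auto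

lemma abs_lift_expectation_le:
  assumes "finite (set_pmf p)" "0 \<le> R" "\<And>t. t \<in> {-R..R} \<Longrightarrow> \<bar>f t\<bar> \<le> B"
  shows "\<bar>lift_expectation R p f\<bar> \<le> B"
proof -
  have "\<bar>lift_expectation R p f\<bar> \<le> (\<Sum>u\<in>set_pmf p. \<bar>pmf p u * signed_lift R f u\<bar>)"
    unfolding lift_expectation_finite[OF assms(1)] by (rule sum_abs)
  also have "\<dots> \<le> (\<Sum>u\<in>set_pmf p. pmf p u * B)"
    by (intro sum_mono) (auto simp: abs_mult intro!: mult_left_mono abs_signed_lift_le assms)
  also have "\<dots> = B"
    using sum_pmf_eq_1[OF assms(1), of p] by (simp add: sum_distrib_right[symmetric])
  finally show ?thesis .
qed

definition mix_atom :: "real \<Rightarrow> 'a \<Rightarrow> 'a pmf \<Rightarrow> 'a pmf" where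
  "mix_atom s u p = bind_pmf (bernoulli_pmf s) (\<lambda>b. if b then return_pmf u else p)"

lemma set_pmf_mix_atom: "set_pmf (mix_atom s u p) \<subseteq> insert u (set_pmf p)"
  unfolding mix_atom_def by (auto split: if_splits)

lemma lift_expectation_mix_atom:
  assumes "finite (set_pmf p)" "0 \<le> s" "s \<le> 1"
  shows "lift_expectation R (mix_atom s u p) f = s * signed_lift R f u + (1 - s) * lift_expectation R p f"
  unfolding lift_expectation_def mix_atom_def
  using assms by (subst pmf_expectation_bind[of UNIV]) (auto simp: UNIV_bool)

definition finite_pmfs :: "'a set \<Rightarrow> 'a pmf set" where
  "finite_pmfs A = {p. finite (set_pmf p) \<and> set_pmf p \<subseteq> A}"

lemma mix_atom_in_finite_pmfs:
  "p \<in> finite_pmfs A \<Longrightarrow> u \<in> A \<Longrightarrow> mix_atom s u p \<in> finite_pmfs A"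
  using set_pmf_mix_atom[of s u p] unfolding finite_pmfs_def by (auto dest: finite_subset)

section \<open>The penalty functional\<close>

definition penalty :: "real \<Rightarrow> (nat \<Rightarrow> real \<Rightarrow> real) \<Rightarrow> nat \<Rightarrow> real \<Rightarrow> (real \<Rightarrow> real) \<Rightarrow> real pmf \<Rightarrow> real"
  where "penalty R \<phi> N \<delta> h p =
    (\<Sum>i<N. (lift_expectation R p (\<phi> i))\<^sup>2) + (max 0 (\<delta> - lift_expectation R p h))\<^sup>2"

lemma penalty_nonneg: "0 \<le> penalty R \<phi> N \<delta> h p"
  unfolding penalty_def by (simp add: sum_nonneg)

lemma lift_expectation_sq_le_penalty:
  "i < N \<Longrightarrow> (lift_expectation R p (\<phi> i))\<^sup>2 \<le> penalty R \<phi> N \<delta> h p"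
  unfolding penalty_def
  using member_le_sum[of i "{..<N}" "\<lambda>i. (lift_expectation R p (\<phi> i))\<^sup>2"]
  by (simp add: add_increasing2)

lemma hinge_sq_le_penalty: "(max 0 (\<delta> - lift_expectation R p h))\<^sup>2 \<le> penalty R \<phi> N \<delta> h p"
  unfolding penalty_def by (simp add: sum_nonneg)

lemma hinge_sq_diff_le: "(max 0 (c - d))\<^sup>2 \<le> (max 0 c)\<^sup>2 - 2 * max 0 c * d + d\<^sup>2" for c d :: real
proof (cases "c \<le> 0")
  case True
  have "(c - d)\<^sup>2 \<le> (-d)\<^sup>2" if "d < c"
    using True that by (intro power_mono) auto
  then have "(max 0 (c - d))\<^sup>2 \<le> d\<^sup>2"
    by (cases "c \<le> d") auto
  with True show ?thesis by simp
next
  case False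
  then have "(max 0 c)\<^sup>2 - 2 * max 0 c * d + d\<^sup>2 = (c - d)\<^sup>2"
    by (simp add: power2_diff)
  moreover have "(max 0 (c - d))\<^sup>2 \<le> (c - d)\<^sup>2"
    by (cases "c \<le> d") auto
  ultimately show ?thesis by simp
qed

lemma penalty_mix_atom_le:
  fixes R u :: real and \<phi> :: "nat \<Rightarrow> real \<Rightarrow> real" and h :: "real \<Rightarrow> real"
  assumes "finite (set_pmf p)" "0 \<le> s" "s \<le> 1"
  defines "a i \<equiv> lift_expectation R p (\<phi> i)" and "y \<equiv> lift_expectation R p h"
    and "v i \<equiv> signed_lift R (\<phi> i) u - lift_expectation R p (\<phi> i)"
    and "w \<equiv> signed_lift R h u - lift_expectation R p h"
  shows "penalty R \<phi> N \<delta> h (mix_atom s u p) \<le> penalty R \<phi> N \<delta> h p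
           + 2 * s * ((\<Sum>i<N. a i * v i) - max 0 (\<delta> - y) * w)
           + s\<^sup>2 * ((\<Sum>i<N. (v i)\<^sup>2) + w\<^sup>2)"
proof -
  have mix: "lift_expectation R (mix_atom s u p) f
             = lift_expectation R p f + s * (signed_lift R f u - lift_expectation R p f)" for f
    using lift_expectation_mix_atom[OF assms(1-3)] by (simp add: algebra_simps)
  have "lift_expectation R (mix_atom s u p) (\<phi> i) = a i + s * v i" for i
    unfolding mix a_def v_def ..
  moreover have "lift_expectation R (mix_atom s u p) h = y + s * w"
    unfolding mix y_def w_def ..
  moreover have "(\<Sum>i<N. (a i + s * v i)\<^sup>2) = (\<Sum>i<N. (a i)\<^sup>2) + 2 * s * (\<Sum>i<N. a i * v i) + s\<^sup>2 * (\<Sum>i<N. (v i)\<^sup>2)"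
    by (simp add: power2_eq_square algebra_simps sum.distrib sum_distrib_left)
  moreover have "(max 0 (\<delta> - (y + s * w)))\<^sup>2 \<le> (max 0 (\<delta> - y))\<^sup>2 - 2 * max 0 (\<delta> - y) * (s * w) + (s * w)\<^sup>2"
    using hinge_sq_diff_le[of "\<delta> - y" "s * w"] by (simp add: algebra_simps)
  ultimately show ?thesis
    unfolding penalty_def a_def [symmetric] y_def [symmetric]
    by (simp add: power_mult_distrib algebra_simps)
qed

lemma penalty_mix_atom_shift_le:
  fixes R \<delta> :: real and \<phi> :: "nat \<Rightarrow> real \<Rightarrow> real" and h :: "real \<Rightarrow> real"
  assumes "finite (set_pmf p)" "0 \<le> s" "s \<le> 1" "t \<in> {-R..R}" "z \<in> {1, -1}"
  defines "a i \<equiv> lift_expectation R p (\<phi> i)" and "y \<equiv> lift_expectation R p h"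
    and "b \<equiv> max 0 (\<delta> - lift_expectation R p h)"
  shows "penalty R \<phi> N \<delta> h (mix_atom s (t + z * (R + 1)) p) \<le> penalty R \<phi> N \<delta> h p
           + 2 * s * (z * ((\<Sum>i<N. a i * \<phi> i t) - b * h t) - (penalty R \<phi> N \<delta> h p - b * \<delta>))
           + s\<^sup>2 * ((\<Sum>i<N. (z * \<phi> i t - a i)\<^sup>2) + (z * h t - y)\<^sup>2)"
proof -
  have shift: "signed_lift R f (t + z * (R + 1)) = z * f t" for f
  proof (cases "z = 1")
    case False
    then have "z = -1"
      using assms(5) by auto
    then have "signed_lift R f (t + z * (R + 1)) = signed_lift R f (t - (R + 1))"
      by (simp add: algebra_simps)
    also have "\<dots> = - f t"
      by (rule signed_lift_left[OF assms(4)])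
    finally show ?thesis
      using \<open>z = -1\<close> by simp
  qed (simp add: signed_lift_right[OF assms(4)])
  have "b * y = b * \<delta> - b\<^sup>2"
    unfolding b_def y_def by (simp add: max_def power2_eq_square algebra_simps)
  then have "(\<Sum>i<N. a i * (z * \<phi> i t - a i)) - b * (z * h t - y)
             = z * ((\<Sum>i<N. a i * \<phi> i t) - b * h t) - (penalty R \<phi> N \<delta> h p - b * \<delta>)"
    unfolding penalty_def a_def [symmetric] b_def [symmetric]
    by (simp add: algebra_simps power2_eq_square sum_subtractf sum_distrib_left)
  then show ?thesis
    using penalty_mix_atom_le[OF assms(1-3), where R = R and u = "t + z * (R + 1)" and \<phi> = \<phi>
                          and h = h and N = N and \<delta> = \<delta>]
    unfolding shift a_def [symmetric] y_def [symmetric] b_def [folded y_def, symmetric] by simp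
qed

lemma penalty_second_order_bound:
  fixes \<phi> :: "nat \<Rightarrow> real \<Rightarrow> real" and h :: "real \<Rightarrow> real"
  assumes "0 \<le> R" "\<And>i. continuous_on {-R..R} (\<phi> i)" "continuous_on {-R..R} h"
  obtains C where "0 \<le> C"
    "\<And>p t z. finite (set_pmf p) \<Longrightarrow> t \<in> {-R..R} \<Longrightarrow> z \<in> {1, -1} \<Longrightarrow>
       (\<Sum>i<N. (z * \<phi> i t - lift_expectation R p (\<phi> i))\<^sup>2) + (z * h t - lift_expectation R p h)\<^sup>2 \<le> C"
proof -
  have "\<exists>B. 0 \<le> B \<and> (\<forall>t\<in>{-R..R}. \<bar>\<phi> i t\<bar> \<le> B)" for i
    using continuous_on_interval_bounded[OF assms(2)] by metis
  then obtain B where B: "\<And>i. 0 \<le> B i" "\<And>i t. t \<in> {-R..R} \<Longrightarrow> \<bar>\<phi> i t\<bar> \<le> B i"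
    by metis
  obtain Bh where Bh: "0 \<le> Bh" "\<And>t. t \<in> {-R..R} \<Longrightarrow> \<bar>h t\<bar> \<le> Bh"
    using continuous_on_interval_bounded[OF assms(3)] by metis
  have sq_le: "(z * f t - lift_expectation R p f)\<^sup>2 \<le> (2 * Bf)\<^sup>2"
    if "finite (set_pmf p)" "t \<in> {-R..R}" "z \<in> {1, -1}" "\<And>t. t \<in> {-R..R} \<Longrightarrow> \<bar>f t\<bar> \<le> Bf"
    for p t z f Bf
  proof -
    have "\<bar>lift_expectation R p f\<bar> \<le> Bf" "\<bar>f t\<bar> \<le> Bf"
      using abs_lift_expectation_le[OF that(1) assms(1) that(4)] that(2,4) by auto
    then have "\<bar>z * f t - lift_expectation R p f\<bar> \<le> 2 * Bf"
      using that(3) by (auto simp: abs_le_iff)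
    then have "\<bar>z * f t - lift_expectation R p f\<bar>\<^sup>2 \<le> (2 * Bf)\<^sup>2"
      by (intro power_mono) auto
    then show ?thesis
      by simp
  qed
  show ?thesis
  proof (rule that[of "(\<Sum>i<N. (2 * B i)\<^sup>2) + (2 * Bh)\<^sup>2"])
    show "0 \<le> (\<Sum>i<N. (2 * B i)\<^sup>2) + (2 * Bh)\<^sup>2"
      by (simp add: sum_nonneg)
  next
    fix p :: "real pmf" and t z :: real
    assume ptz: "finite (set_pmf p)" "t \<in> {-R..R}" "z \<in> {1, -1}"
    have "(z * \<phi> i t - lift_expectation R p (\<phi> i))\<^sup>2 \<le> (2 * B i)\<^sup>2" for i
      by (rule sq_le[OF ptz]) (rule B(2))
    with sq_le[OF ptz Bh(2)] show "(\<Sum>i<N. (z * \<phi> i t - lift_expectation R p (\<phi> i))\<^sup>2) + (z * h t - lift_expectation R p h)\<^sup>2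
          \<le> (\<Sum>i<N. (2 * B i)\<^sup>2) + (2 * Bh)\<^sup>2"
      by (intro add_mono sum_mono)
  qed
qed

lemma penalty_near_minimizer_first_order:
  fixes R \<delta> :: real and \<phi> :: "nat \<Rightarrow> real \<Rightarrow> real" and h :: "real \<Rightarrow> real"
  assumes p: "finite (set_pmf p)" and s: "0 < s" "s \<le> 1" and t: "t \<in> {-R..R}" and z: "z \<in> {1, -1}"
    and min: "m \<le> penalty R \<phi> N \<delta> h (mix_atom s (t + z * (R + 1)) p)"
    and near_min: "penalty R \<phi> N \<delta> h p < m + s * m / 2"
    and C: "(\<Sum>i<N. (z * \<phi> i t - lift_expectation R p (\<phi> i))\<^sup>2) + (z * h t - lift_expectation R p h)\<^sup>2 \<le> C"
    and sC: "s * C \<le> m / 2"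
  defines "b \<equiv> max 0 (\<delta> - lift_expectation R p h)"
  shows "penalty R \<phi> N \<delta> h p - b * \<delta> - m / 2
           < z * ((\<Sum>i<N. lift_expectation R p (\<phi> i) * \<phi> i t) - b * h t)"
proof -
  let ?P = "penalty R \<phi> N \<delta> h" and ?G = "(\<Sum>i<N. lift_expectation R p (\<phi> i) * \<phi> i t) - b * h t"
  have "m \<le> ?P p + 2 * s * (z * ?G - (?P p - b * \<delta>))
             + s\<^sup>2 * ((\<Sum>i<N. (z * \<phi> i t - lift_expectation R p (\<phi> i))\<^sup>2) + (z * h t - lift_expectation R p h)\<^sup>2)"
    using min penalty_mix_atom_shift_le[OF p less_imp_le[OF s(1)] s(2) t z,
                where \<phi> = \<phi> and h = h and N = N and \<delta> = \<delta>]
    unfolding b_def by linarith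
  also have "\<dots> \<le> ?P p + 2 * s * (z * ?G - (?P p - b * \<delta>)) + s\<^sup>2 * C"
    using mult_left_mono[OF C zero_le_power2[of s]] by simp
  finally have "0 < s * (m / 2 + 2 * (z * ?G - (?P p - b * \<delta>)) + s * C)"
    using near_min by (simp add: power2_eq_square algebra_simps)
  then have "0 < m / 2 + 2 * (z * ?G - (?P p - b * \<delta>)) + s * C"
    using s(1) by (simp add: zero_less_mult_iff)
  then have "0 < m + 2 * (z * ?G - (?P p - b * \<delta>))"
    using sC by linarith
  then show ?thesis
    by argo
qed

lemma approx_of_scaled_approx:
  fixes a :: "nat \<Rightarrow> real" and \<phi> :: "nat \<Rightarrow> real \<Rightarrow> real" and h :: "real \<Rightarrow> real"
  assumes "0 < b" "\<And>t. t \<in> S \<Longrightarrow> \<bar>(\<Sum>i<N. a i * \<phi> i t) - b * h t\<bar> < b * \<delta>"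
  shows "\<exists>c. \<forall>t\<in>S. \<bar>h t - (\<Sum>i<N. c i * \<phi> i t)\<bar> < \<delta>"
proof (intro exI[of _ "\<lambda>i. a i / b"] ballI)
  fix t assume "t \<in> S"
  have sum_div: "(\<Sum>i<N. a i / b * \<phi> i t) = (\<Sum>i<N. a i * \<phi> i t) / b"
    by (simp add: sum_divide_distrib)
  have "h t - (\<Sum>i<N. a i / b * \<phi> i t) = (b * h t - (\<Sum>i<N. a i * \<phi> i t)) / b"
    unfolding sum_div using \<open>0 < b\<close> by (simp add: diff_divide_distrib)
  then have "\<bar>h t - (\<Sum>i<N. a i / b * \<phi> i t)\<bar> = \<bar>(\<Sum>i<N. a i * \<phi> i t) - b * h t\<bar> / b"
    using \<open>0 < b\<close> by (simp add: abs_minus_commute)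
  also have "\<dots> < \<delta>"
    using assms(2)[OF \<open>t \<in> S\<close>] \<open>0 < b\<close> by (simp add: pos_divide_less_eq mult.commute)
  finally show "\<bar>h t - (\<Sum>i<N. a i / b * \<phi> i t)\<bar> < \<delta>" .
qed

lemma positive_infimum:
  fixes f :: "'a \<Rightarrow> real"
  assumes "x \<in> S" "\<And>x. x \<in> S \<Longrightarrow> \<eta> \<le> f x" "0 < \<eta>"
  shows "\<exists>m>0. (\<forall>x\<in>S. m \<le> f x) \<and> (\<forall>\<epsilon>>0. \<exists>x\<in>S. f x < m + \<epsilon>)"
proof (intro exI conjI ballI allI impI)
  have ne: "f ` S \<noteq> {}"
    using assms(1) by blast
  have bdd: "bdd_below (f ` S)"
    by (rule bdd_belowI2[where m = \<eta>]) (rule assms(2))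
  have "\<eta> \<le> Inf (f ` S)"
    by (rule cInf_greatest[OF ne]) (use assms(2) in auto)
  then show "0 < Inf (f ` S)"
    using \<open>0 < \<eta>\<close> by simp
  show "Inf (f ` S) \<le> f x" if "x \<in> S" for x
    using bdd that by (auto intro: cInf_lower)
  show "\<exists>x\<in>S. f x < Inf (f ` S) + \<epsilon>" if "0 < \<epsilon>" for \<epsilon>
    using cInf_less_iff[OF ne bdd, of "Inf (f ` S) + \<epsilon>"] that by auto
qed

lemma approx_of_penalty_bounded_below:
  fixes \<phi> :: "nat \<Rightarrow> real \<Rightarrow> real" and h :: "real \<Rightarrow> real"
  assumes R: "0 \<le> R" and \<phi>: "\<And>i. continuous_on {-R..R} (\<phi> i)" and h: "continuous_on {-R..R} h"
    and "0 < \<eta>" and \<eta>: "\<And>p. p \<in> finite_pmfs {-(2*R+2)<..2*R+2} \<Longrightarrow> \<eta> \<le> penalty R \<phi> N \<delta> h p"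
  shows "\<exists>c. \<forall>t\<in>{-R..R}. \<bar>h t - (\<Sum>i<N. c i * \<phi> i t)\<bar> < \<delta>"
proof -
  let ?A = "{-(2*R+2)<..2*R+2}" and ?P = "penalty R \<phi> N \<delta> h"
  obtain C where "0 \<le> C" and C: "\<And>p t z. finite (set_pmf p) \<Longrightarrow> t \<in> {-R..R} \<Longrightarrow> z \<in> {1, -1} \<Longrightarrow>
       (\<Sum>i<N. (z * \<phi> i t - lift_expectation R p (\<phi> i))\<^sup>2) + (z * h t - lift_expectation R p h)\<^sup>2 \<le> C"
    using penalty_second_order_bound[where \<phi> = \<phi> and h = h and N = N, OF R \<phi> h] by blast
  have "return_pmf 0 \<in> finite_pmfs ?A"
    using R by (simp add: finite_pmfs_def)
  from positive_infimum[where f = ?P, OF this \<eta> \<open>0 < \<eta>\<close>]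
  obtain m where "0 < m" and m_le: "\<forall>q\<in>finite_pmfs ?A. m \<le> ?P q"
    and near: "\<forall>\<epsilon>>0. \<exists>p\<in>finite_pmfs ?A. ?P p < m + \<epsilon>"
    by blast
  define s where "s = min 1 (m / (2 * C + 1))"
  have s: "0 < s" "s \<le> 1" "s \<le> m / (2 * C + 1)"
    unfolding s_def using \<open>0 < m\<close> \<open>0 \<le> C\<close> by auto
  then have "s * C \<le> m / 2"
    using \<open>0 \<le> C\<close> by (simp add: pos_le_divide_eq algebra_simps)
  obtain p where p: "p \<in> finite_pmfs ?A" "?P p < m + s * m / 2"
    using near \<open>0 < s\<close> \<open>0 < m\<close> by (meson divide_pos_pos mult_pos_pos zero_less_numeral)
  then have "finite (set_pmf p)"
    by (simp add: finite_pmfs_def)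
  define b where "b = max 0 (\<delta> - lift_expectation R p h)"
  define G where "G t = (\<Sum>i<N. lift_expectation R p (\<phi> i) * \<phi> i t) - b * h t" for t
  have first_order: "?P p - b * \<delta> - m / 2 < z * G t" if t: "t \<in> {-R..R}" and z: "z \<in> {1, -1}" for t z
  proof -
    have "t + z * (R + 1) \<in> ?A"
      using t z R by auto
    then have "m \<le> ?P (mix_atom s (t + z * (R + 1)) p)"
      by (intro m_le[rule_format] mix_atom_in_finite_pmfs p(1))
    then show ?thesis
      unfolding G_def b_def
      by (rule penalty_near_minimizer_first_order[OF \<open>finite (set_pmf p)\<close> s(1,2) t z _ p(2)
                 C[OF \<open>finite (set_pmf p)\<close> t z] \<open>s * C \<le> m / 2\<close>])
  qed
  have G_bound: "\<bar>G t\<bar> < b * \<delta> - m / 2" if "t \<in> {-R..R}" for t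
  proof -
    have "?P p - b * \<delta> - m / 2 < G t" "?P p - b * \<delta> - m / 2 < - G t"
      using first_order[OF that, of 1] first_order[OF that, of "-1"] by simp_all
    then show ?thesis
      using bspec[OF m_le p(1)] by (simp add: abs_less_iff)
  qed
  have "m / 2 < b * \<delta>"
    using G_bound[of 0] R abs_ge_zero[of "G 0"] by simp
  moreover have "0 \<le> b"
    unfolding b_def by simp
  ultimately have "0 < b"
    using \<open>0 < m\<close> by (cases "b = 0") auto
  moreover have "\<bar>G t\<bar> < b * \<delta>" if "t \<in> {-R..R}" for t
    using G_bound[OF that] \<open>0 < m\<close> by linarith
  ultimately show ?thesis
    unfolding G_def by (rule approx_of_scaled_approx)
qed

lemma pmf_sequence_weak_limit:
  fixes P :: "nat \<Rightarrow> real pmf"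
  assumes "a < b" "\<And>n. set_pmf (P n) \<subseteq> {a<..b}"
  obtains r \<rho> where "strict_mono r" "real_distribution \<rho>"
    "\<And>(f :: real \<Rightarrow> real) B. (\<And>u. isCont f u) \<Longrightarrow> (\<And>u. \<bar>f u\<bar> \<le> B) \<Longrightarrow>
       (\<lambda>n. measure_pmf.expectation (P (r n)) f) \<longlonglongrightarrow> (\<integral>u. f u \<partial>\<rho>)"
proof -
  define \<mu> where "\<mu> n = distr (measure_pmf (P n)) borel id" for n
  have \<mu>: "real_distribution (\<mu> n)" for n
    unfolding \<mu>_def by (intro prob_space.real_distribution_distr prob_space_measure_pmf) simp
  have "measure (\<mu> n) {a<..b} = 1" for n
  proof -
    have "measure (\<mu> n) {a<..b} = measure (measure_pmf (P n)) {a<..b}"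
      unfolding \<mu>_def by (subst measure_distr) auto
    also have "\<dots> = 1"
      unfolding measure_pmf_conv_infsetsum by (rule infsetsum_pmf_eq_1) (rule assms(2))
    finally show ?thesis .
  qed
  then have "tight \<mu>"
    unfolding tight_def using \<mu> \<open>a < b\<close> by (intro conjI allI impI exI[of _ a] exI[of _ b]) auto
  then obtain r \<rho> where r: "strict_mono r" "real_distribution \<rho>" "weak_conv_m (\<mu> \<circ> id \<circ> r) \<rho>"
    using tight_imp_convergent_subsubsequence[of \<mu> id] by (auto simp: strict_mono_def)
  show ?thesis
  proof (rule that[OF r(1,2)])
    fix f :: "real \<Rightarrow> real" and B
    assume "\<And>u. isCont f u" "\<And>u. \<bar>f u\<bar> \<le> B"
    then have "(\<lambda>n. \<integral>u. f u \<partial>\<mu> (r n)) \<longlonglongrightarrow> (\<integral>u. f u \<partial>\<rho>)"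
      using weak_conv_imp_integral_bdd_continuous_conv[of "\<mu> \<circ> id \<circ> r" \<rho> f B] \<mu> r(2,3) by simp
    moreover have "(\<integral>u. f u \<partial>\<mu> n) = measure_pmf.expectation (P n) f" for n
      unfolding \<mu>_def using \<open>\<And>u. isCont f u\<close>
      by (subst integral_distr) (auto intro!: borel_measurable_continuous_onI continuous_at_imp_continuous_on)
    ultimately show "(\<lambda>n. measure_pmf.expectation (P (r n)) f) \<longlonglongrightarrow> (\<integral>u. f u \<partial>\<rho>)"
      by simp
  qed
qed

lemma lift_expectation_subseq_limit:
  fixes P :: "nat \<Rightarrow> real pmf"
  assumes R: "0 \<le> R" and P: "\<And>n. P n \<in> finite_pmfs {-(2*R+2)<..2*R+2}"
  obtains r \<rho> where "strict_mono r" "real_distribution \<rho>"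
    "\<And>f. continuous_on {-R..R} f \<Longrightarrow>
       (\<lambda>n. lift_expectation R (P (r n)) f) \<longlonglongrightarrow> (\<integral>u. signed_lift R f u \<partial>\<rho>)"
proof -
  obtain r \<rho> where r: "strict_mono r" and \<rho>: "real_distribution \<rho>" and
    weak: "\<And>(f :: real \<Rightarrow> real) B. (\<And>u. isCont f u) \<Longrightarrow> (\<And>u. \<bar>f u\<bar> \<le> B) \<Longrightarrow>
       (\<lambda>n. measure_pmf.expectation (P (r n)) f) \<longlonglongrightarrow> (\<integral>u. f u \<partial>\<rho>)"
    by (rule pmf_sequence_weak_limit[of "-(2*R+2)" "2*R+2" P]) (use R P in \<open>auto simp: finite_pmfs_def\<close>)
  show ?thesis
  proof (rule that[OF r \<rho>])
    fix f :: "real \<Rightarrow> real"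
    assume f: "continuous_on {-R..R} f"
    obtain B where B: "\<And>t. t \<in> {-R..R} \<Longrightarrow> \<bar>f t\<bar> \<le> B"
      using continuous_on_interval_bounded[OF f] by blast
    have "isCont (signed_lift R f) u" for u
      using continuous_on_signed_lift[OF f] by (simp add: continuous_on_eq_continuous_at)
    moreover have "\<bar>signed_lift R f u\<bar> \<le> B" for u
      by (rule abs_signed_lift_le[OF R B])
    ultimately show "(\<lambda>n. lift_expectation R (P (r n)) f) \<longlonglongrightarrow> (\<integral>u. signed_lift R f u \<partial>\<rho>)"
      unfolding lift_expectation_def by (rule weak)
  qed
qed

lemma signed_limit_of_vanishing_penalty:
  fixes \<phi> :: "nat \<Rightarrow> real \<Rightarrow> real" and h :: "real \<Rightarrow> real"
  assumes R: "0 \<le> R" and \<phi>: "\<And>i. continuous_on {-R..R} (\<phi> i)" and h: "continuous_on {-R..R} h"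
    and small: "\<And>N \<eta>. 0 < \<eta> \<Longrightarrow> \<exists>p\<in>finite_pmfs {-(2*R+2)<..2*R+2}. penalty R \<phi> N \<delta> h p < \<eta>"
  shows "\<exists>\<rho>. real_distribution \<rho> \<and> (\<forall>i. (\<integral>u. signed_lift R (\<phi> i) u \<partial>\<rho>) = 0)
               \<and> \<delta> \<le> (\<integral>u. signed_lift R h u \<partial>\<rho>)"
proof -
  have "\<forall>n. \<exists>p\<in>finite_pmfs {-(2*R+2)<..2*R+2}. penalty R \<phi> n \<delta> h p < 1 / (real n + 1)"
    using small by simp
  then obtain P where P: "\<And>n. P n \<in> finite_pmfs {-(2*R+2)<..2*R+2}"
    "\<And>n. penalty R \<phi> n \<delta> h (P n) < 1 / (real n + 1)"
    by metis
  obtain r \<rho> where r: "strict_mono r" and \<rho>: "real_distribution \<rho>" and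
    conv: "\<And>f. continuous_on {-R..R} f \<Longrightarrow>
       (\<lambda>n. lift_expectation R (P (r n)) f) \<longlonglongrightarrow> (\<integral>u. signed_lift R f u \<partial>\<rho>)"
    using lift_expectation_subseq_limit[where P = P, OF R P(1)] by blast
  have "(\<lambda>n. 1 / (real n + 1)) \<longlonglongrightarrow> 0"
    using LIMSEQ_inverse_real_of_nat by (simp add: inverse_eq_divide add.commute)
  from LIMSEQ_subseq_LIMSEQ[OF this r]
  have "(\<lambda>n. 1 / (real (r n) + 1)) \<longlonglongrightarrow> 0"
    by (simp add: o_def)
  then have vanish: "(\<lambda>n. penalty R \<phi> (r n) \<delta> h (P (r n))) \<longlonglongrightarrow> 0"
    by (rule tendsto_sandwich[of "\<lambda>_. 0", rotated 2, OF tendsto_const])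
       (simp_all add: penalty_nonneg less_imp_le[OF P(2)])
  have "(\<integral>u. signed_lift R (\<phi> i) u \<partial>\<rho>)\<^sup>2 \<le> 0" for i
  proof (rule tendsto_le[OF sequentially_bot vanish])
    show "(\<lambda>n. (lift_expectation R (P (r n)) (\<phi> i))\<^sup>2) \<longlonglongrightarrow> (\<integral>u. signed_lift R (\<phi> i) u \<partial>\<rho>)\<^sup>2"
      by (intro tendsto_intros conv \<phi>)
    have "eventually (\<lambda>n. i < r n) sequentially"
      using filterlim_subseq[OF r] eventually_gt_at_top[of i] unfolding filterlim_iff by blast
    then show "eventually (\<lambda>n. (lift_expectation R (P (r n)) (\<phi> i))\<^sup>2
                                \<le> penalty R \<phi> (r n) \<delta> h (P (r n))) sequentially"
      by eventually_elim (rule lift_expectation_sq_le_penalty)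
  qed
  moreover have "(max 0 (\<delta> - (\<integral>u. signed_lift R h u \<partial>\<rho>)))\<^sup>2 \<le> 0"
  proof (rule tendsto_le[OF sequentially_bot vanish])
    show "(\<lambda>n. (max 0 (\<delta> - lift_expectation R (P (r n)) h))\<^sup>2)
          \<longlonglongrightarrow> (max 0 (\<delta> - (\<integral>u. signed_lift R h u \<partial>\<rho>)))\<^sup>2"
      by (intro tendsto_intros conv h)
  qed (simp add: hinge_sq_le_penalty)
  ultimately show ?thesis
    using \<rho> by auto
qed

section \<open>Signed measures on a segment of the space\<close>

lemma regular_finite_borel_restrict:
  fixes M M' :: "(real ^ 'n) measure" and X :: "(real ^ 'n) set"
  assumes M': "finite_measure M'" "sets M' = sets borel" and "closed X"
    and M: "finite_measure M" "sets M = sets (restrict_space borel X)"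
    and M_eq: "\<And>A. A \<in> sets M \<Longrightarrow> emeasure M A = emeasure M' A"
  shows "regular_finite_borel X M"
proof -
  have sets_M: "A \<in> sets M \<longleftrightarrow> A \<subseteq> X \<and> A \<in> sets borel" for A
    unfolding M(2) using \<open>closed X\<close> by (auto simp: sets_restrict_space_iff)
  have M'_fin: "emeasure M' (space M') \<noteq> \<infinity>" and sets_M': "sets M' = sets borel"
    using M' by (simp_all add: finite_measure.emeasure_finite)
  have inner: "emeasure M A = (SUP K \<in> {K. compact K \<and> K \<subseteq> A}. emeasure M K)" if A: "A \<in> sets M" for A
  proof -
    have "emeasure M A = (SUP K \<in> {K. K \<subseteq> A \<and> compact K}. emeasure M' K)"
      using M_eq[OF A] inner_regular[OF sets_M' M'_fin] A sets_M by simp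
    also have "\<dots> = (SUP K \<in> {K. compact K \<and> K \<subseteq> A}. emeasure M K)"
    proof (rule SUP_cong)
      fix K
      assume "K \<in> {K. compact K \<and> K \<subseteq> A}"
      then have "K \<in> sets M"
        using A sets_M by (auto intro: borel_closed compact_imp_closed)
      then show "emeasure M' K = emeasure M K"
        by (simp add: M_eq)
    qed auto
    finally show ?thesis .
  qed
  have outer: "emeasure M A = (INF U \<in> {U. openin (top_of_set X) U \<and> A \<subseteq> U}. emeasure M U)"
    if A: "A \<in> sets M" for A
  proof (rule antisym)
    show "emeasure M A \<le> (INF U \<in> {U. openin (top_of_set X) U \<and> A \<subseteq> U}. emeasure M U)"
      using \<open>closed X\<close> sets_M by (intro INF_greatest emeasure_mono) (auto simp: openin_open)
  next
    have "(INF U \<in> {U. openin (top_of_set X) U \<and> A \<subseteq> U}. emeasure M U) \<le> emeasure M' V"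
      if "A \<subseteq> V" "open V" for V
    proof (rule INF_lower2)
      show "X \<inter> V \<in> {U. openin (top_of_set X) U \<and> A \<subseteq> U}"
        using that A sets_M by (auto simp: openin_open)
      show "emeasure M (X \<inter> V) \<le> emeasure M' V"
        using that \<open>closed X\<close> sets_M sets_M' by (subst M_eq) (auto intro!: emeasure_mono)
    qed
    then have "(INF U \<in> {U. openin (top_of_set X) U \<and> A \<subseteq> U}. emeasure M U)
               \<le> (INF V \<in> {V. A \<subseteq> V \<and> open V}. emeasure M' V)"
      by (intro INF_greatest) auto
    also have "\<dots> = emeasure M A"
      using outer_regular[OF sets_M' M'_fin] A sets_M M_eq[OF A] by simp
    finally show "(INF U \<in> {U. openin (top_of_set X) U \<and> A \<subseteq> U}. emeasure M U) \<le> emeasure M A" .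
  qed
  from inner outer M show ?thesis
    unfolding regular_finite_borel_def by simp
qed

lemma regular_finite_borel_distr:
  fixes N :: "'a measure" and g :: "'a \<Rightarrow> real ^ 'n" and X :: "(real ^ 'n) set"
  assumes N: "finite_measure N" and g: "g \<in> borel_measurable N"
    and gX: "\<And>x. x \<in> space N \<Longrightarrow> g x \<in> X" and "closed X"
  shows "regular_finite_borel X (distr N (restrict_space borel X) g)"
proof (rule regular_finite_borel_restrict[OF _ _ \<open>closed X\<close>])
  have g': "g \<in> measurable N (restrict_space borel X)"
    using g gX by (intro measurable_restrict_space2) auto
  show "finite_measure (distr N borel g)" "finite_measure (distr N (restrict_space borel X) g)"
    by (rule finite_measure.finite_measure_distr[OF N g]) (rule finite_measure.finite_measure_distr[OF N g'])
  show "emeasure (distr N (restrict_space borel X) g) A = emeasure (distr N borel g) A"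
    if "A \<in> sets (distr N (restrict_space borel X) g)" for A
    using that \<open>closed X\<close> by (simp add: emeasure_distr[OF g'] emeasure_distr[OF g] sets_restrict_space_iff)
qed simp_all

lemma finite_measure_density_le_1:
  assumes "finite_measure M" "w \<in> borel_measurable M" "\<And>x. w x \<le> 1"
  shows "finite_measure (density M (\<lambda>x. ennreal (w x)))"
proof (rule finite_measureI)
  have "emeasure (density M (\<lambda>x. ennreal (w x))) (space M) = (\<integral>\<^sup>+ x. ennreal (w x) * indicator (space M) x \<partial>M)"
    using assms(2) by (intro emeasure_density) auto
  also have "\<dots> \<le> (\<integral>\<^sup>+ x. 1 \<partial>M)"
    using assms(3) by (intro nn_integral_mono) (auto simp: indicator_def)
  also have "\<dots> < \<infinity>"
    using finite_measure.emeasure_finite[OF assms(1), of "space M"] by (simp add: less_top)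
  finally show "emeasure (density M (\<lambda>x. ennreal (w x))) (space (density M (\<lambda>x. ennreal (w x)))) \<noteq> \<infinity>"
    by simp
qed

lemma integral_distr_density:
  fixes F :: "'b::topological_space \<Rightarrow> real"
  assumes "w \<in> borel_measurable M" "\<And>x. 0 \<le> w x"
    and "g \<in> measurable (density M (\<lambda>x. ennreal (w x))) (restrict_space borel X)"
    and "F \<in> borel_measurable (restrict_space borel X)" "(\<lambda>x. F (g x)) \<in> borel_measurable M"
  shows "(\<integral>y. F y \<partial>distr (density M (\<lambda>x. ennreal (w x))) (restrict_space borel X) g)
         = (\<integral>x. w x * F (g x) \<partial>M)"
  using assms by (simp add: integral_distr integral_density)

lemma integrable_bounded_continuous:
  fixes f :: "real \<Rightarrow> real"
  assumes "finite_measure M" "sets M = sets borel" "continuous_on UNIV f" "\<And>x. \<bar>f x\<bar> \<le> B"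
  shows "integrable M f"
proof (rule finite_measure.integrable_const_bound[OF assms(1)])
  show "AE x in M. norm (f x) \<le> B"
    using assms(4) by simp
  show "f \<in> borel_measurable M"
    unfolding measurable_cong_sets[OF assms(2) refl] by (rule borel_measurable_continuous_onI[OF assms(3)])
qed

lemma weighted_pushforward:
  fixes \<rho> :: "real measure" and g :: "real \<Rightarrow> real ^ 'n" and X :: "(real ^ 'n) set"
  assumes \<rho>: "real_distribution \<rho>"
    and w: "continuous_on UNIV w" "\<And>u. 0 \<le> w u" "\<And>u. w u \<le> 1"
    and g: "continuous_on UNIV g" "\<And>u. g u \<in> X" and "compact X"
  defines "M \<equiv> distr (density \<rho> (\<lambda>u. ennreal (w u))) (restrict_space borel X) g"
  shows "regular_finite_borel X M"
    and "\<And>F. continuous_on UNIV F \<Longrightarrow> integrable \<rho> (\<lambda>u. w u * F (g u))"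
    and "\<And>F. continuous_on UNIV F \<Longrightarrow> (\<integral>x. F x \<partial>M) = (\<integral>u. w u * F (g u) \<partial>\<rho>)"
proof -
  interpret real_distribution \<rho> by (rule \<rho>)
  have sets_\<rho>: "sets \<rho> = sets borel"
    by (rule events_eq_borel)
  have g_borel: "g \<in> borel_measurable \<rho>"
    unfolding measurable_cong_sets[OF sets_\<rho> refl] by (rule borel_measurable_continuous_onI[OF g(1)])
  then have g_meas: "g \<in> measurable (density \<rho> (\<lambda>u. ennreal (w u))) (restrict_space borel X)"
    using g(2) by (intro measurable_restrict_space2) auto
  have w_meas: "w \<in> borel_measurable \<rho>"
    unfolding measurable_cong_sets[OF sets_\<rho> refl] by (rule borel_measurable_continuous_onI[OF w(1)])
  show "regular_finite_borel X M"
    unfolding M_def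
  proof (rule regular_finite_borel_distr)
    show "finite_measure (density \<rho> (\<lambda>u. ennreal (w u)))"
      by (rule finite_measure_density_le_1[OF finite_measure_axioms w_meas w(3)])
  qed (use g_borel g(2) compact_imp_closed[OF \<open>compact X\<close>] in auto)
  show "integrable \<rho> (\<lambda>u. w u * F (g u))" if F: "continuous_on UNIV F" for F
  proof -
    have "bounded (F ` X)"
      using \<open>compact X\<close> F by (intro compact_imp_bounded compact_continuous_image) (auto intro: continuous_on_subset)
    then obtain B where B: "\<And>x. x \<in> X \<Longrightarrow> \<bar>F x\<bar> \<le> B"
      by (auto simp: bounded_iff)
    show ?thesis
    proof (rule integrable_bounded_continuous[OF finite_measure_axioms sets_\<rho>])
      show "continuous_on UNIV (\<lambda>u. w u * F (g u))"
        by (intro continuous_on_mult w(1) continuous_on_compose2[OF F g(1)]) auto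
      show "\<bar>w u * F (g u)\<bar> \<le> B" for u
        using mult_mono[OF w(3) B[OF g(2)] zero_le_one abs_ge_zero] w(2)[of u] by (simp add: abs_mult)
    qed
  qed
  show "(\<integral>x. F x \<partial>M) = (\<integral>u. w u * F (g u) \<partial>\<rho>)" if F: "continuous_on UNIV F" for F
    unfolding M_def
  proof (rule integral_distr_density[OF w_meas w(2) g_meas])
    show "F \<in> borel_measurable (restrict_space borel X)"
      by (rule measurable_restrict_space1) (rule borel_measurable_continuous_onI[OF F])
    show "(\<lambda>u. F (g u)) \<in> borel_measurable \<rho>"
      unfolding measurable_cong_sets[OF sets_\<rho> refl]
      by (rule borel_measurable_continuous_onI[OF continuous_on_compose2[OF F g(1)]]) simp
  qed
qed

lemma signed_lift_integral_as_measure_difference: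
  fixes \<rho> :: "real measure" and v :: "real ^ 'n"
  assumes \<rho>: "real_distribution \<rho>" and R: "0 \<le> R"
  defines "X \<equiv> (\<lambda>t. t *\<^sub>R v) ` {-R..R}"
  obtains M1 M2 where "regular_finite_borel X M1" "regular_finite_borel X M2"
    "\<And>F. continuous_on UNIV F \<Longrightarrow>
       (\<integral>x. F x \<partial>M1) - (\<integral>x. F x \<partial>M2) = (\<integral>u. signed_lift R (\<lambda>t. F (t *\<^sub>R v)) u \<partial>\<rho>)"
proof -
  have "compact X"
    unfolding X_def by (intro compact_continuous_image continuous_intros) auto
  define w where "w d u = max 0 (min 1 (d * u))" for d u :: real
  define g where "g d u = clamp (-R) R (u - d * (R + 1)) *\<^sub>R v" for d u
  have w: "continuous_on UNIV (w d)" "0 \<le> w d u" "w d u \<le> 1" for d u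
    unfolding w_def by (auto intro!: continuous_intros)
  have "continuous_on UNIV (\<lambda>y. clamp (-R) R y *\<^sub>R v)"
    by (rule clamp_continuous_on) (intro continuous_intros)
  then have g_cont: "continuous_on UNIV (g d)" for d
    unfolding g_def by (rule continuous_on_compose2) (auto intro!: continuous_intros)
  have "clamp (-R) R y \<in> {-R..R}" for y :: real
    using clamp_in_interval[of "-R" R y] R by simp
  then have g_X: "g d u \<in> X" for d u
    unfolding g_def X_def by (rule rev_image_eqI) (rule refl)
  note push = weighted_pushforward[OF \<rho> w(1) w(2) w(3) g_cont g_X \<open>compact X\<close>]
  have "(\<integral>x. F x \<partial>distr (density \<rho> (\<lambda>u. ennreal (w 1 u))) (restrict_space borel X) (g 1))
      - (\<integral>x. F x \<partial>distr (density \<rho> (\<lambda>u. ennreal (w (-1) u))) (restrict_space borel X) (g (-1)))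
      = (\<integral>u. signed_lift R (\<lambda>t. F (t *\<^sub>R v)) u \<partial>\<rho>)"
    if F: "continuous_on UNIV F" for F
  proof -
    have "(\<integral>u. w 1 u * F (g 1 u) \<partial>\<rho>) - (\<integral>u. w (-1) u * F (g (-1) u) \<partial>\<rho>)
          = (\<integral>u. w 1 u * F (g 1 u) - w (-1) u * F (g (-1) u) \<partial>\<rho>)"
      by (rule Bochner_Integration.integral_diff[OF push(2)[OF F] push(2)[OF F], symmetric])
    also have "(\<lambda>u. w 1 u * F (g 1 u) - w (-1) u * F (g (-1) u)) = signed_lift R (\<lambda>t. F (t *\<^sub>R v))"
      by (simp add: fun_eq_iff signed_lift_def w_def g_def algebra_simps)
    finally show ?thesis
      by (simp add: push(3)[OF F])
  qed
  with push(1) push(1) show ?thesis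
    by (rule that)
qed

lemma discriminatory_measure_eq:
  fixes X :: "(real ^ 'n) set"
  assumes "discriminatory \<sigma> TYPE('n::finite)" "compact X" "X \<noteq> {}"
    and M1: "regular_finite_borel X M1" and M2: "regular_finite_borel X M2"
    and "\<And>m k. m \<in> int_vecs \<Longrightarrow> k \<in> \<int> \<Longrightarrow>
           (\<integral>x. \<sigma> (m \<bullet> x + k) \<partial>M1) - (\<integral>x. \<sigma> (m \<bullet> x + k) \<partial>M2) = 0"
  shows "M1 = M2"
proof -
  have "\<forall>m \<in> int_vecs. \<forall>k \<in> \<int>.
          (\<integral>x. \<sigma> (m \<bullet> x + k) \<partial>M1) - (\<integral>x. \<sigma> (m \<bullet> x + k) \<partial>M2) = 0"
    using assms(6) by blast
  then have "\<forall>A \<in> sets M1. measure M1 A - measure M2 A = 0"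
    using assms(1-5) unfolding discriminatory_def by blast
  moreover have "finite_measure M1" "finite_measure M2" "sets M1 = sets M2"
    using M1 M2 unfolding regular_finite_borel_def by auto
  ultimately show "M1 = M2"
    by (intro measure_eqI) (simp_all add: finite_measure.emeasure_eq_measure)
qed

lemma signed_limit_annihilates_continuous:
  fixes \<sigma> h :: "real \<Rightarrow> real"
  assumes \<sigma>: "continuous_on UNIV \<sigma>" and disc: "discriminatory \<sigma> TYPE('n::finite)"
    and R: "0 \<le> R" and \<rho>: "real_distribution \<rho>"
    and ridge: "\<And>m k. m \<in> \<int> \<Longrightarrow> k \<in> \<int> \<Longrightarrow> (\<integral>u. signed_lift R (\<lambda>t. \<sigma> (m * t + k)) u \<partial>\<rho>) = 0"
    and h: "continuous_on {-R..R} h"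
  shows "(\<integral>u. signed_lift R h u \<partial>\<rho>) = 0"
proof -
  fix i :: 'n
  define v :: "real ^ 'n" where "v = axis i 1"
  define X where "X = (\<lambda>t. t *\<^sub>R v) ` {-R..R}"
  obtain M1 M2 where M1: "regular_finite_borel X M1" and M2: "regular_finite_borel X M2"
    and diff: "\<And>F. continuous_on UNIV F \<Longrightarrow>
       (\<integral>x. F x \<partial>M1) - (\<integral>x. F x \<partial>M2) = (\<integral>u. signed_lift R (\<lambda>t. F (t *\<^sub>R v)) u \<partial>\<rho>)"
    using signed_lift_integral_as_measure_difference[OF \<rho> R, of v] unfolding X_def by blast
  have "compact X" "X \<noteq> {}"
    unfolding X_def using R by (auto intro!: compact_continuous_image continuous_intros)
  have "(\<integral>x. \<sigma> (m \<bullet> x + k) \<partial>M1) - (\<integral>x. \<sigma> (m \<bullet> x + k) \<partial>M2) = 0"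
    if "m \<in> int_vecs" "k \<in> \<int>" for m k
  proof -
    have "continuous_on UNIV (\<lambda>x. \<sigma> (m \<bullet> x + k))"
      by (rule continuous_on_compose2[OF \<sigma>]) (auto intro!: continuous_intros)
    then have "(\<integral>x. \<sigma> (m \<bullet> x + k) \<partial>M1) - (\<integral>x. \<sigma> (m \<bullet> x + k) \<partial>M2)
               = (\<integral>u. signed_lift R (\<lambda>t. \<sigma> (m $ i * t + k)) u \<partial>\<rho>)"
      by (simp add: diff v_def inner_axis mult.commute)
    also have "\<dots> = 0"
      using that by (intro ridge) (auto simp: int_vecs_def)
    finally show ?thesis .
  qed
  then have "M1 = M2"
    by (intro discriminatory_measure_eq[OF disc \<open>compact X\<close> \<open>X \<noteq> {}\<close> M1 M2]) simp
  define F where "F x = h (clamp (-R) R (x $ i))" for x :: "real ^ 'n"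
  have "continuous_on UNIV F"
    unfolding F_def using h
    by (intro continuous_on_compose2[OF clamp_continuous_on[of "-R" R h UNIV]] continuous_intros) auto
  then have "(\<integral>u. signed_lift R (\<lambda>t. F (t *\<^sub>R v)) u \<partial>\<rho>) = 0"
    using diff \<open>M1 = M2\<close> by simp
  then show ?thesis
    by (simp add: F_def v_def signed_lift_clamp[OF R])
qed

section \<open>Density of ridge sums\<close>

lemma ridge_sums_dense_on_interval:
  fixes \<sigma> h :: "real \<Rightarrow> real" and e :: "nat \<Rightarrow> real \<times> real"
  assumes \<sigma>: "continuous_on UNIV \<sigma>" and disc: "discriminatory \<sigma> TYPE('n::finite)"
    and e: "range e = \<int> \<times> \<int>" and R: "0 \<le> R" and h: "continuous_on {-R..R} h" and "0 < \<epsilon>"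
  shows "\<exists>N c. \<forall>t\<in>{-R..R}. \<bar>h t - (\<Sum>i<N. c i * \<sigma> (fst (e i) * t + snd (e i)))\<bar> < \<epsilon>"
proof -
  define \<phi> where "\<phi> i t = \<sigma> (fst (e i) * t + snd (e i))" for i t
  have \<phi>: "continuous_on {-R..R} (\<phi> i)" for i
    unfolding \<phi>_def by (rule continuous_on_compose2[OF \<sigma>]) (auto intro!: continuous_intros)
  show ?thesis
  proof (cases "\<exists>N \<eta>. 0 < \<eta> \<and> (\<forall>p\<in>finite_pmfs {-(2*R+2)<..2*R+2}. \<eta> \<le> penalty R \<phi> N \<epsilon> h p)")
    case True
    then obtain N \<eta> where "0 < \<eta>" "\<And>p. p \<in> finite_pmfs {-(2*R+2)<..2*R+2} \<Longrightarrow> \<eta> \<le> penalty R \<phi> N \<epsilon> h p"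
      by blast
    from approx_of_penalty_bounded_below[OF R \<phi> h this] show ?thesis
      unfolding \<phi>_def by blast
  next
    case False
    then have small: "\<exists>p\<in>finite_pmfs {-(2*R+2)<..2*R+2}. penalty R \<phi> N \<epsilon> h p < \<eta>"
      if "0 < \<eta>" for N \<eta>
      using False that by (auto simp: not_le)
    from signed_limit_of_vanishing_penalty[OF R \<phi> h small]
    obtain \<rho> where \<rho>: "real_distribution \<rho>" and
      zero: "\<forall>i. (\<integral>u. signed_lift R (\<phi> i) u \<partial>\<rho>) = 0" and ge: "\<epsilon> \<le> (\<integral>u. signed_lift R h u \<partial>\<rho>)"
      by blast
    have "(\<integral>u. signed_lift R (\<lambda>t. \<sigma> (m * t + k)) u \<partial>\<rho>) = 0" if "m \<in> \<int>" "k \<in> \<int>" for m k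
    proof -
      have "(m, k) \<in> range e"
        using that e by simp
      then obtain i where "e i = (m, k)"
        by (metis rangeE)
      then show ?thesis
        using zero[rule_format, of i] by (simp add: \<phi>_def [abs_def])
    qed
    with signed_limit_annihilates_continuous[OF \<sigma> disc R \<rho> _ h] ge \<open>0 < \<epsilon>\<close> show ?thesis
      by simp
  qed
qed

definition NN_approximable :: "(real \<Rightarrow> real) \<Rightarrow> (real ^ 'n \<Rightarrow> real) \<Rightarrow> bool" where
  "NN_approximable \<sigma> f \<longleftrightarrow> (\<forall>K. compact K \<longrightarrow> (\<forall>\<epsilon>>0. \<exists>s\<in>NN \<sigma>. \<forall>x\<in>K. \<bar>s x - f x\<bar> < \<epsilon>))"

lemma NN_approximable_cmult:
  assumes "NN_approximable \<sigma> f"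
  shows "NN_approximable \<sigma> (\<lambda>x. c * f x)"
  unfolding NN_approximable_def
proof (intro allI impI)
  fix K :: "(real ^ 'a) set" and \<epsilon> :: real
  assume "compact K" "0 < \<epsilon>"
  moreover have "0 < \<epsilon> / (\<bar>c\<bar> + 1)"
    using \<open>0 < \<epsilon>\<close> by (simp add: add_pos_nonneg)
  ultimately obtain s where s: "s \<in> NN \<sigma>" "\<And>x. x \<in> K \<Longrightarrow> \<bar>s x - f x\<bar> < \<epsilon> / (\<bar>c\<bar> + 1)"
    using assms[unfolded NN_approximable_def, rule_format] by meson
  have "\<bar>c * s x - c * f x\<bar> < \<epsilon>" if "x \<in> K" for x
  proof -
    have "\<bar>c * s x - c * f x\<bar> = \<bar>c\<bar> * \<bar>s x - f x\<bar>"
      by (simp add: abs_mult flip: right_diff_distrib)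
    also have "\<dots> \<le> \<bar>c\<bar> * (\<epsilon> / (\<bar>c\<bar> + 1))"
      using s(2)[OF that] by (intro mult_left_mono) auto
    also have "\<dots> = \<epsilon> * (\<bar>c\<bar> / (\<bar>c\<bar> + 1))"
      by simp
    also have "\<dots> < \<epsilon>"
      using \<open>0 < \<epsilon>\<close> by (simp add: pos_divide_less_eq add_pos_nonneg distrib_left)
    finally show ?thesis .
  qed
  then show "\<exists>s\<in>NN \<sigma>. \<forall>x\<in>K. \<bar>s x - c * f x\<bar> < \<epsilon>"
    by (intro bexI[OF _ NN_cmult[OF s(1), of c]]) simp
qed

lemma NN_approximable_add:
  assumes "NN_approximable \<sigma> f" "NN_approximable \<sigma> g"
  shows "NN_approximable \<sigma> (\<lambda>x. f x + g x)"
  unfolding NN_approximable_def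
proof (intro allI impI)
  fix K :: "(real ^ 'a) set" and \<epsilon> :: real
  assume "compact K" "0 < \<epsilon>"
  moreover have "0 < \<epsilon> / 2"
    using \<open>0 < \<epsilon>\<close> by simp
  ultimately obtain s s' where s: "s \<in> NN \<sigma>" "\<And>x. x \<in> K \<Longrightarrow> \<bar>s x - f x\<bar> < \<epsilon> / 2"
    and s': "s' \<in> NN \<sigma>" "\<And>x. x \<in> K \<Longrightarrow> \<bar>s' x - g x\<bar> < \<epsilon> / 2"
    using assms[unfolded NN_approximable_def, rule_format] by meson
  have "\<bar>(s x + s' x) - (f x + g x)\<bar> < \<epsilon>" if "x \<in> K" for x
  proof -
    have "\<bar>(s x + s' x) - (f x + g x)\<bar> \<le> \<bar>s x - f x\<bar> + \<bar>s' x - g x\<bar>"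
      using abs_triangle_ineq[of "s x - f x" "s' x - g x"] by (simp add: algebra_simps)
    then show ?thesis
      using s(2)[OF that] s'(2)[OF that] by linarith
  qed
  then show "\<exists>s\<in>NN \<sigma>. \<forall>x\<in>K. \<bar>s x - (f x + g x)\<bar> < \<epsilon>"
    by (intro bexI[OF _ NN_add[OF s(1) s'(1)]]) simp
qed

lemma range_enumeration_Ints_Times:
  obtains e :: "nat \<Rightarrow> real \<times> real" where "range e = \<int> \<times> \<int>"
proof -
  have "countable (\<int> \<times> \<int> :: (real \<times> real) set)"
    unfolding Ints_def by (intro countable_SIGMA countable_image) auto
  then have "range (from_nat_into (\<int> \<times> \<int>)) = (\<int> \<times> \<int> :: (real \<times> real) set)"
    by (intro range_from_nat_into) auto
  then show ?thesis
    by (rule that)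
qed

lemma NN_approximable_exp:
  fixes \<sigma> :: "real \<Rightarrow> real" and m :: "real ^ 'n::finite"
  assumes \<sigma>: "continuous_on UNIV \<sigma>" and disc: "discriminatory \<sigma> TYPE('n)" and m: "m \<in> int_vecs"
  shows "NN_approximable \<sigma> (\<lambda>x. exp (m \<bullet> x))"
  unfolding NN_approximable_def
proof (intro allI impI)
  fix K :: "(real ^ 'n) set" and \<epsilon> :: real
  assume "compact K" "0 < \<epsilon>"
  then have "bounded ((\<lambda>x. m \<bullet> x) ` K)"
    by (intro compact_imp_bounded compact_continuous_image continuous_intros)
  then obtain B where B: "\<And>x. x \<in> K \<Longrightarrow> \<bar>m \<bullet> x\<bar> \<le> B"
    unfolding bounded_iff by auto
  define R where "R = max 0 B"
  have R: "0 \<le> R" "\<And>x. x \<in> K \<Longrightarrow> m \<bullet> x \<in> {-R..R}"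
    using B unfolding R_def by (fastforce simp: abs_le_iff)+
  obtain e :: "nat \<Rightarrow> real \<times> real" where e: "range e = \<int> \<times> \<int>"
    by (rule range_enumeration_Ints_Times)
  obtain N c where c: "\<And>t. t \<in> {-R..R} \<Longrightarrow> \<bar>exp t - (\<Sum>i<N. c i * \<sigma> (fst (e i) * t + snd (e i)))\<bar> < \<epsilon>"
    using ridge_sums_dense_on_interval[OF \<sigma> disc e R(1) continuous_on_exp[OF continuous_on_id] \<open>0 < \<epsilon>\<close>]
    by blast
  define s where "s x = (\<Sum>i<N. c i * \<sigma> ((fst (e i) *\<^sub>R m) \<bullet> x + snd (e i)))" for x
  have "s \<in> NN \<sigma>"
    unfolding s_def
  proof (intro NN_sum NN_cmult NN_ridge)
    fix i
    have "e i \<in> \<int> \<times> \<int>"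
      unfolding e [symmetric] by (rule rangeI)
    then show "fst (e i) *\<^sub>R m \<in> int_vecs" "snd (e i) \<in> \<int>"
      using m by (auto intro!: int_vecs_scaleR)
  qed simp
  moreover have "\<bar>s x - exp (m \<bullet> x)\<bar> < \<epsilon>" if "x \<in> K" for x
    using c[OF R(2)[OF that]] by (simp add: s_def abs_minus_commute)
  ultimately show "\<exists>s\<in>NN \<sigma>. \<forall>x\<in>K. \<bar>s x - exp (m \<bullet> x)\<bar> < \<epsilon>"
    by blast
qed

lemma NN_approximable_exp_poly:
  assumes "continuous_on UNIV \<sigma>" "discriminatory \<sigma> TYPE('n::finite)" "f \<in> (exp_poly :: (real ^ 'n \<Rightarrow> real) set)"
  shows "NN_approximable \<sigma> f"
  using assms(3)
  by induction (auto intro: NN_approximable_exp[OF assms(1,2)] NN_approximable_cmult NN_approximable_add)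

theorem lemma4p2p3:
  fixes \<sigma> :: "real \<Rightarrow> real"
  assumes "continuous_on UNIV \<sigma>"
    and "discriminatory \<sigma> TYPE('n::finite)"
  shows "\<forall>(K :: (real ^ 'n) set) g \<epsilon>. K \<noteq> {} \<and> compact K \<and> continuous_on UNIV g \<and> \<epsilon> > 0 \<longrightarrow>
           (\<exists>s \<in> NN \<sigma>. (SUP x\<in>K. \<bar>s x - g x\<bar>) < \<epsilon>)"
proof (intro allI impI, elim conjE)
  fix K :: "(real ^ 'n) set" and g :: "real ^ 'n \<Rightarrow> real" and \<epsilon> :: real
  assume "K \<noteq> {}" "compact K" "continuous_on UNIV g" "0 < \<epsilon>"
  then have "0 < \<epsilon> / 4"
    by simp
  then obtain f where "f \<in> exp_poly" and f: "\<forall>x\<in>K. \<bar>f x - g x\<bar> < \<epsilon> / 4"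
    using exp_poly_dense[OF \<open>compact K\<close> continuous_on_subset[OF \<open>continuous_on UNIV g\<close>]] by blast
  obtain s where "s \<in> NN \<sigma>" and s: "\<forall>x\<in>K. \<bar>s x - f x\<bar> < \<epsilon> / 4"
    using NN_approximable_exp_poly[OF assms \<open>f \<in> exp_poly\<close>] \<open>compact K\<close> \<open>0 < \<epsilon> / 4\<close>
    unfolding NN_approximable_def by blast
  have "\<bar>s x - g x\<bar> \<le> \<epsilon> / 2" if "x \<in> K" for x
    using abs_triangle_ineq[of "s x - f x" "f x - g x"] bspec[OF f that] bspec[OF s that] by simp
  then have "(SUP x\<in>K. \<bar>s x - g x\<bar>) \<le> \<epsilon> / 2"
    by (intro cSUP_least \<open>K \<noteq> {}\<close>)
  also have "\<dots> < \<epsilon>"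
    using \<open>0 < \<epsilon>\<close> by simp
  finally show "\<exists>s \<in> NN \<sigma>. (SUP x\<in>K. \<bar>s x - g x\<bar>) < \<epsilon>"
    using \<open>s \<in> NN \<sigma>\<close> by blast
qed

end
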